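(* Consider problem (P) under Assumptions (A1)–(A3) and run the SMIL algorithm with tolerance $\varepsilon\ge 0$. Then at every iteration $k$ at which the algorithm has not terminated, the backtracking loop (step S4) is executed only finitely many times: after finitely many reductions $\Delta_k\leftarrow\kappa\Delta_k$, either the algorithm terminates at step S3 or the sufficient decrease condition $a_k\ge\varrho\Psi_k$ holds, so that the trial point $x^{k+1}$ is accepted.
   Context: Problem (P): minimize $f(x)$ subject to $x\in\mathcal{X}:=\bar{\mathcal{X}}\cap\{x\in\mathbb{R}^n : x_i\in\mathbb{Z}\ \forall i\in\mathcal{I}\}$, with $\bar{\mathcal{X}}\subseteq\mathbb{R}^n$ a closed convex polyhedral set, $\mathcal{I}\subseteq\{1,\dots,n\}$, $\mathcal{X}\ne\emptyset$, $f:\mathbb{R}^n\to\mathbb{R}$. Write $x=(u,z)$ with $u$ the components with indices not in $\mathcal{I}$ and $z$ those in $\mathcal{I}$. Assumptions: (A1) $f$ is $C^1$ with locally Lipschitz gradient; (A2) $f(u,z)=f_1(u)+\langle f_2,z\rangle$; (A3) the feasible integer parts $\{z:(u,z)\in\mathcal{X}\}$ form a bounded set. $\|x\|_{PL}$ is the $\ell_1$- or $\ell_\infty$-norm of the components with indices not in $\mathcal{I}$; $\mathbb{B}_{PL}(x,\Delta):=\{w:\|w-x\|_{PL}\le\Delta\}$. SMIL algorithm. Input $x^0\in\mathcal{X}$, $\varepsilon\ge0$; parameters $\Delta_0>0$, $\varrho,\kappa\in(0,1)$, $\kappa_m\in(0,1]$. Set $m_0:=f(x^0)$. For $k=0,1,2,\dots$: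 (S1) compute $x^{k+1}\in\arg\min\{\langle\nabla f(x^k),x\rangle : x\in\mathcal{X}\cap\mathbb{B}_{PL}(x^k,\Delta_k)\}$; (S2) set $a_k:=m_k-f(x^{k+1})$ and $\Psi_k:=\langle\nabla f(x^k),x^k-x^{k+1}\rangle$; (S3) if $\Psi_k\le\varepsilon$, return $x^k$; (S4) if $a_k<\varrho\Psi_k$, set $\Delta_k\leftarrow\kappa\Delta_k$ and go back to (S1) (backtracking); (S5) set $m_{k+1}:=(1-\kappa_m)m_k+\kappa_m f(x^{k+1})$; (S6) choose $\Delta_{k+1}$ either by the rule $\Delta_{k+1}=\kappa\Delta_k$ if $\rho_k<\varrho_1$, $\Delta_{k+1}=\Delta_k$ if $\varrho_1\le\rho_k<\varrho_2$, $\Delta_{k+1}=\Delta_k/\kappa$ if $\rho_k\ge\varrho_2$, where $\rho_k:=a_k/\Psi_k$ and $\varrho\le\varrho_1<\varrho_2<1$; or by a reset $\Delta_{k+1}\in[\Delta_{\min},\Delta_{\max}]$ with $0<\Delta_{\min}\le\Delta_{\max}$. *)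

theory Defs
  imports "HOL-Analysis.Analysis"
begin

text \<open>Vectors live in real^'n; the index set I (of type 'n set) marks the integer
  components z, the remaining components form the continuous part u.\<close>

definition feasible_set :: "(real^'n) set \<Rightarrow> 'n set \<Rightarrow> (real^'n) set" where
  "feasible_set Xbar I = Xbar \<inter> {x. \<forall>i\<in>I. x $ i \<in> \<int>}"

definition pl_norm :: "bool \<Rightarrow> 'n::finite set \<Rightarrow> real^'n \<Rightarrow> real" where
  "pl_norm use_l1 I x =
     (if use_l1 then (\<Sum>i\<in>UNIV - I. \<bar>x $ i\<bar>)
      else Max (insert 0 ((\<lambda>i. \<bar>x $ i\<bar>) ` (UNIV - I))))"

definition pl_ball :: "bool \<Rightarrow> 'n::finite set \<Rightarrow> real^'n \<Rightarrow> real \<Rightarrow> (real^'n) set" where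
  "pl_ball use_l1 I x \<Delta> = {w. pl_norm use_l1 I (w - x) \<le> \<Delta>}"

definition smil_argmin ::
  "(real^'n \<Rightarrow> real^'n) \<Rightarrow> (real^'n) set \<Rightarrow> bool \<Rightarrow> 'n::finite set \<Rightarrow> real^'n \<Rightarrow> real \<Rightarrow> (real^'n) set" where
  "smil_argmin g X use_l1 I x \<Delta> =
     {y \<in> X \<inter> pl_ball use_l1 I x \<Delta>. \<forall>w \<in> X \<inter> pl_ball use_l1 I x \<Delta>. g x \<bullet> y \<le> g x \<bullet> w}"

definition smil_assumptions ::
  "(real^'n \<Rightarrow> real) \<Rightarrow> (real^'n \<Rightarrow> real^'n) \<Rightarrow> (real^'n) set \<Rightarrow> 'n::finite set \<Rightarrow> bool" where
  "smil_assumptions f g Xbar I \<longleftrightarrow>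
     polyhedron Xbar \<and> feasible_set Xbar I \<noteq> {} \<and>
     \<comment> \<open>(A1): f is differentiable with gradient g, and g is locally Lipschitz\<close>
     (\<forall>x. (f has_derivative (\<lambda>h. g x \<bullet> h)) (at x)) \<and>
     (\<forall>x. \<exists>\<delta>>0. \<exists>L. \<forall>y\<in>ball x \<delta>. \<forall>w\<in>ball x \<delta>. norm (g y - g w) \<le> L * dist y w) \<and>
     \<comment> \<open>(A2): f(u,z) = f1(u) + <f2, z>\<close>
     (\<exists>f1 :: real^'n \<Rightarrow> real. \<exists>f2 :: real^'n.
        (\<forall>x y. (\<forall>i\<in>UNIV - I. x $ i = y $ i) \<longrightarrow> f1 x = f1 y) \<and>
        (\<forall>x. f x = f1 x + (\<Sum>i\<in>I. f2 $ i * x $ i))) \<and>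
     \<comment> \<open>(A3): the integer parts of feasible points form a bounded set\<close>
     bounded ((\<lambda>x. \<chi> i. if i \<in> I then x $ i else 0) ` feasible_set Xbar I)"

definition smil_params ::
  "real \<Rightarrow> real \<Rightarrow> real \<Rightarrow> real \<Rightarrow> real \<Rightarrow> real \<Rightarrow> real \<Rightarrow> real \<Rightarrow> real \<Rightarrow> bool" where
  "smil_params \<epsilon> \<Delta>0 \<rho> \<kappa> \<kappa>m \<rho>1 \<rho>2 \<Delta>min \<Delta>max \<longleftrightarrow>
     \<epsilon> \<ge> 0 \<and> \<Delta>0 > 0 \<and> 0 < \<rho> \<and> \<rho> < 1 \<and> 0 < \<kappa> \<and> \<kappa> < 1 \<and> 0 < \<kappa>m \<and> \<kappa>m \<le> 1 \<and>
     \<rho> \<le> \<rho>1 \<and> \<rho>1 < \<rho>2 \<and> \<rho>2 < 1 \<and> 0 < \<Delta>min \<and> \<Delta>min \<le> \<Delta>max"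

text \<open>A run of SMIL that has completed iterations 0,...,k-1 without terminating.
  x i = x^i, m i = m_i, D i = trial radius Delta_i at the start of iteration i,
  J i = number of backtracking reductions in iteration i, so that the accepted radius is
  D i * kappa^(J i).  For each rejected radius a computed trial point is recorded to exist
  (it failed (S3) and failed the sufficient decrease test of (S4)).\<close>
definition smil_run ::
  "(real^'n \<Rightarrow> real) \<Rightarrow> (real^'n \<Rightarrow> real^'n) \<Rightarrow> (real^'n) set \<Rightarrow> 'n::finite set \<Rightarrow> bool \<Rightarrow>
   real \<Rightarrow> real \<Rightarrow> real \<Rightarrow> real \<Rightarrow> real \<Rightarrow> real \<Rightarrow> real \<Rightarrow> real \<Rightarrow> real \<Rightarrow> real^'n \<Rightarrow>
   (nat \<Rightarrow> real^'n) \<Rightarrow> (nat \<Rightarrow> real) \<Rightarrow> (nat \<Rightarrow> real) \<Rightarrow> (nat \<Rightarrow> nat) \<Rightarrow> nat \<Rightarrow> bool" where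
  "smil_run f g Xbar I use_l1 \<epsilon> \<Delta>0 \<rho> \<kappa> \<kappa>m \<rho>1 \<rho>2 \<Delta>min \<Delta>max x0 x m D J k \<longleftrightarrow>
     (let X = feasible_set Xbar I;
          AM = smil_argmin g X use_l1 I;
          \<Psi> = (\<lambda>i y. g (x i) \<bullet> (x i - y));
          a = (\<lambda>i y. m i - f y)
      in x0 \<in> X \<and> x 0 = x0 \<and> m 0 = f x0 \<and> D 0 = \<Delta>0 \<and>
         (\<forall>i<k.
            (\<forall>j<J i. \<exists>y \<in> AM (x i) (D i * \<kappa> ^ j). \<Psi> i y > \<epsilon> \<and> a i y < \<rho> * \<Psi> i y) \<and>
            x (Suc i) \<in> AM (x i) (D i * \<kappa> ^ J i) \<and>
            \<Psi> i (x (Suc i)) > \<epsilon> \<and> a i (x (Suc i)) \<ge> \<rho> * \<Psi> i (x (Suc i)) \<and>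
            m (Suc i) = (1 - \<kappa>m) * m i + \<kappa>m * f (x (Suc i)) \<and>
            (let \<Delta> = D i * \<kappa> ^ J i; rk = a i (x (Suc i)) / \<Psi> i (x (Suc i)) in
               (rk < \<rho>1 \<and> D (Suc i) = \<kappa> * \<Delta>) \<or>
               (\<rho>1 \<le> rk \<and> rk < \<rho>2 \<and> D (Suc i) = \<Delta>) \<or>
               (rk \<ge> \<rho>2 \<and> D (Suc i) = \<Delta> / \<kappa>) \<or>
               (\<Delta>min \<le> D (Suc i) \<and> D (Suc i) \<le> \<Delta>max))))"

end

theory Submission
  imports Defs
begin

text \<open>Suppose every backtracking step at \<open>x\<^sub>k\<close> fails, so the radii \<open>r\<^sub>j = \<Delta>\<^sub>k \<kappa>\<^sup>j\<close> tend to 0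
  while all trial points \<open>y\<^sub>j\<close> have \<open>\<Psi>\<^sub>j > 0\<close>. By (A3) the integer parts of the \<open>y\<^sub>j\<close> take
  finitely many values, so one of them, \<open>z\<^sup>*\<close>, recurs infinitely often; the points \<open>y\<^sub>j\<close> with
  that integer part converge to \<open>p = (u\<^sub>k, z\<^sup>*)\<close>, which by closedness is feasible for every
  subproblem and no better than \<open>x\<^sub>k\<close> for the linear model. Convex combinations of \<open>p\<close> and
  one trial point \<open>y\<^sub>s\<close> then show that \<open>\<Psi>\<^sub>j\<close> decreases at most linearly in \<open>r\<^sub>j\<close>. Because \<open>f\<close>
  is linear in \<open>z\<close>, its first-order Taylor remainder at \<open>x\<^sub>k\<close> is \<open>o(r\<^sub>j)\<close>, and hence
  eventually \<open>f(x\<^sub>k) - f(y\<^sub>j) \<ge> \<rho> \<Psi>\<^sub>j\<close>, so the sufficient decrease test passes.\<close>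

definition int_part :: "'n set \<Rightarrow> real^'n \<Rightarrow> real^'n" where
  "int_part I x = (\<chi> i. if i \<in> I then x $ i else 0)"

definition join_parts :: "'n set \<Rightarrow> real^'n \<Rightarrow> real^'n \<Rightarrow> real^'n" where
  "join_parts I z u = (\<chi> i. if i \<in> I then z $ i else u $ i)"

lemma pl_norm_cong: "(\<And>i. i \<notin> I \<Longrightarrow> v $ i = w $ i) \<Longrightarrow> pl_norm b I v = pl_norm b I w"
  unfolding pl_norm_def by (auto intro!: sum.cong arg_cong[where f=Max] image_cong)

lemma pl_norm_nonneg: "pl_norm b I v \<ge> 0"
  unfolding pl_norm_def by (auto intro: sum_nonneg Max_ge)

lemma pl_norm_zero: "pl_norm b I 0 = 0"
proof -
  have "insert 0 ((\<lambda>x. 0::real) ` (UNIV - I)) = {0}" by auto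
  then show ?thesis unfolding pl_norm_def by (auto intro!: Max_eqI)
qed

lemma pl_norm_scaleR:
  assumes "t \<ge> 0" shows "pl_norm b I (t *\<^sub>R v) = t * pl_norm b I v"
proof (cases b)
  case True then show ?thesis unfolding pl_norm_def
    using assms by (simp add: sum_distrib_left abs_mult)
next
  case False
  have "mono ((*) t)" using assms by (simp add: mono_def mult_left_mono)
  then have "t * Max (insert 0 ((\<lambda>i. \<bar>v $ i\<bar>) ` (UNIV - I))) =
        Max ((*) t ` insert 0 ((\<lambda>i. \<bar>v $ i\<bar>) ` (UNIV - I)))"
    by (rule mono_Max_commute) auto
  also have "(*) t ` insert 0 ((\<lambda>i. \<bar>v $ i\<bar>) ` (UNIV - I)) =
      insert 0 ((\<lambda>i. \<bar>(t *\<^sub>R v) $ i\<bar>) ` (UNIV - I))"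
    using assms by (auto simp: abs_mult image_image)
  finally show ?thesis using False unfolding pl_norm_def by simp
qed

lemma pl_norm_join_parts_diff:
  "pl_norm b I (join_parts I z u - w) = pl_norm b I (u - w)"
  by (rule pl_norm_cong) (simp add: join_parts_def)

lemma norm_le_card_mult_pl_norm:
  fixes v :: "real^'n::finite"
  assumes "\<And>i. i \<in> I \<Longrightarrow> v $ i = 0"
  shows "norm v \<le> real CARD('n) * pl_norm b I v"
proof -
  have "norm v \<le> (\<Sum>i\<in>UNIV. \<bar>v $ i\<bar>)" by (rule norm_le_l1_cart)
  also have "\<dots> = (\<Sum>i\<in>UNIV - I. \<bar>v $ i\<bar>)"
    using assms by (intro sum.mono_neutral_right) auto
  also have "\<dots> \<le> real CARD('n) * pl_norm b I v"
  proof (cases b)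
    case True
    have "1 * pl_norm b I v \<le> real CARD('n) * pl_norm b I v"
      using pl_norm_nonneg[of b I v] by (intro mult_right_mono) (auto simp: Suc_leI)
    then show ?thesis using True unfolding pl_norm_def by simp
  next
    case False
    have "(\<Sum>i\<in>UNIV - I. \<bar>v $ i\<bar>) \<le> real (card (UNIV - I)) * pl_norm b I v"
      using False unfolding pl_norm_def by (intro sum_bounded_above) auto
    also have "\<dots> \<le> real CARD('n) * pl_norm b I v"
      using pl_norm_nonneg[of b I v] by (intro mult_right_mono) (auto simp: card_mono)
    finally show ?thesis .
  qed
  finally show ?thesis .
qed

lemma finite_if_bounded_Ints_components:
  fixes S :: "(real^'n::finite) set"
  assumes "bounded S" "\<And>v i. v \<in> S \<Longrightarrow> v $ i \<in> \<int>"
  shows "finite S"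
proof -
  obtain B where B: "\<And>v. v \<in> S \<Longrightarrow> norm v \<le> B" using assms(1) bounded_iff by blast
  define N where "N = \<lceil>B\<rceil>"
  have "S \<subseteq> (\<lambda>h. \<chi> i. real_of_int (h i)) ` Pi UNIV (\<lambda>_. {-N..N})"
  proof
    fix v assume v: "v \<in> S"
    have "\<forall>i. \<exists>t. v $ i = real_of_int t" using assms(2)[OF v] Ints_cases by metis
    then obtain h where h: "\<And>i. v $ i = real_of_int (h i)" by metis
    have "h i \<in> {-N..N}" for i
    proof -
      have "\<bar>real_of_int (h i)\<bar> \<le> B"
        using component_le_norm_cart[of v i] B[OF v] h[of i] by linarith
      moreover have "B \<le> real_of_int N" unfolding N_def by (rule le_of_int_ceiling)
      ultimately show ?thesis by (auto simp: abs_le_iff)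
    qed
    moreover have "v = (\<chi> i. real_of_int (h i))" by (simp add: vec_eq_iff h)
    ultimately show "v \<in> (\<lambda>h. \<chi> i. real_of_int (h i)) ` Pi UNIV (\<lambda>_. {-N..N})" by blast
  qed
  moreover have "finite (Pi UNIV (\<lambda>_::'n. {-N..N}))"
    using finite_PiE[of UNIV "\<lambda>_::'n. {-N..N}"] by (simp add: PiE_UNIV_domain)
  ultimately show ?thesis using finite_subset by blast
qed

lemma int_part_recurs:
  fixes y :: "nat \<Rightarrow> real^'n::finite"
  assumes "bounded (int_part I ` feasible_set Xbar I)" "\<And>j. y j \<in> feasible_set Xbar I"
  obtains s where "\<exists>\<^sub>F j in sequentially. int_part I (y j) = int_part I (y s)"
proof -
  have "finite (int_part I ` range y)"
  proof (rule finite_if_bounded_Ints_components)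
    show "bounded (int_part I ` range y)"
      using assms by (blast intro: bounded_subset)
    show "v $ i \<in> \<int>" if "v \<in> int_part I ` range y" for v i
      using that assms(2) unfolding int_part_def feasible_set_def by auto
  qed
  then obtain s where "infinite {j. int_part I (y j) = int_part I (y s)}"
    using pigeonhole_infinite[OF infinite_UNIV_nat, of "\<lambda>j. int_part I (y j)"]
    by (auto simp: image_image)
  then show thesis
    using that unfolding frequently_sequentially infinite_nat_iff_unbounded_le by auto
qed

text \<open>The point \<open>join_parts I (y s) x\<close> is the limit of the trial points sharing the
  integer part of \<open>y s\<close>, and it lies in every ball around \<open>x\<close>.\<close>

lemma smil_argmin_limit_point:
  fixes x :: "real^'n::finite"
  assumes "closed Xbar" "x \<in> feasible_set Xbar I"
    and "bounded (int_part I ` feasible_set Xbar I)" "r \<longlonglongrightarrow> 0"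
    and y: "\<And>j. y j \<in> smil_argmin g (feasible_set Xbar I) b I x (r j)"
  obtains s where "join_parts I (y s) x \<in> feasible_set Xbar I"
    and "g x \<bullet> join_parts I (y s) x \<le> g x \<bullet> x"
proof -
  define S where "S = Xbar \<inter> {v. g x \<bullet> v \<le> g x \<bullet> x}"
  define C where "C = real CARD('n)"
  have yX: "y j \<in> feasible_set Xbar I" and yball: "pl_norm b I (y j - x) \<le> r j" for j
    using y unfolding smil_argmin_def pl_ball_def by auto
  have yS: "y j \<in> S" for j
  proof -
    have "pl_norm b I (x - x) \<le> r j"
      using pl_norm_nonneg[of b I "y j - x"] yball[of j] by (simp add: pl_norm_zero)
    then show ?thesis
      using y[of j] assms(2) unfolding smil_argmin_def pl_ball_def S_def feasible_set_def by auto
  qed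
  obtain s where recur: "\<exists>\<^sub>F j in sequentially. int_part I (y j) = int_part I (y s)"
    by (rule int_part_recurs[OF assms(3) yX])
  define p where "p = join_parts I (y s) x"
  have "p \<in> closure S"
    unfolding closure_approachable
  proof (intro allI impI)
    fix e :: real assume "e > 0"
    then have "e / C > 0" by (simp add: C_def)
    then have "\<exists>\<^sub>F j in sequentially. r j < e / C \<and> int_part I (y j) = int_part I (y s)"
      by (intro frequently_eventually_conj[OF recur] order_tendstoD(2)[OF assms(4)])
    then obtain j where j: "r j < e / C" "int_part I (y j) = int_part I (y s)"
      by (auto elim: frequentlyE)
    have "(y j - p) $ i = 0" if "i \<in> I" for i
      using arg_cong[OF j(2), of "\<lambda>v. v $ i"] that by (simp add: int_part_def p_def join_parts_def)
    then have "norm (y j - p) \<le> C * pl_norm b I (y j - p)"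
      unfolding C_def by (rule norm_le_card_mult_pl_norm)
    also have "pl_norm b I (y j - p) = pl_norm b I (y j - x)"
      by (rule pl_norm_cong) (simp add: p_def join_parts_def)
    also have "C * \<dots> \<le> C * r j" using yball[of j] by (simp add: C_def)
    also have "\<dots> < e" using j(1) by (simp add: C_def field_simps)
    finally show "\<exists>v\<in>S. dist v p < e" using yS[of j] by (auto simp: dist_norm)
  qed
  then have "p \<in> S"
    using assms(1) by (simp add: S_def closed_Int closed_halfspace_le)
  moreover have "p $ i \<in> \<int>" if "i \<in> I" for i
    using yX[of s] that by (simp add: p_def join_parts_def feasible_set_def)
  ultimately show thesis
    using that unfolding p_def S_def feasible_set_def by auto
qed

text \<open>The segment from \<open>join_parts I v x\<close> to \<open>v\<close> keeps the integer part fixed, so its point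
  at parameter \<open>r / R\<close> is feasible for the subproblem of radius \<open>r\<close>.\<close>

lemma smil_argmin_decrease_lower_bound:
  assumes "convex Xbar"
    and p: "join_parts I v x \<in> feasible_set Xbar I" "g x \<bullet> join_parts I v x \<le> g x \<bullet> x"
    and v: "v \<in> feasible_set Xbar I" "pl_norm b I (v - x) \<le> R"
    and y: "y \<in> smil_argmin g (feasible_set Xbar I) b I x r"
    and r: "0 \<le> r" "r \<le> R" "0 < R"
  shows "r * (g x \<bullet> (x - v)) \<le> R * (g x \<bullet> (x - y))"
proof -
  define p where "p = join_parts I v x"
  define t where "t = r / R"
  have t: "0 \<le> t" "t \<le> 1" using r by (auto simp: t_def)
  define w where "w = (1 - t) *\<^sub>R p + t *\<^sub>R v"
  have "w \<in> Xbar"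
    using assms(1) p(1) v(1) t unfolding w_def p_def feasible_set_def convex_def by auto
  moreover have "w $ i = v $ i" if "i \<in> I" for i
    using that by (simp add: w_def p_def join_parts_def algebra_simps)
  ultimately have wX: "w \<in> feasible_set Xbar I"
    using v(1) unfolding feasible_set_def by auto
  have "pl_norm b I (w - x) = pl_norm b I (t *\<^sub>R (v - x))"
    by (rule pl_norm_cong) (simp add: w_def p_def join_parts_def algebra_simps)
  also have "\<dots> \<le> t * R" using t v(2) by (simp add: pl_norm_scaleR mult_left_mono)
  finally have "pl_norm b I (w - x) \<le> r" using r by (simp add: t_def)
  then have "g x \<bullet> y \<le> g x \<bullet> w"
    using y wX unfolding smil_argmin_def pl_ball_def by auto
  then have "g x \<bullet> (x - y) \<ge> (1 - t) * (g x \<bullet> (x - p)) + t * (g x \<bullet> (x - v))"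
    by (simp add: w_def algebra_simps)
  moreover have "(1 - t) * (g x \<bullet> (x - p)) \<ge> 0"
    using t p(2) by (simp add: p_def inner_diff_right)
  ultimately have "t * (g x \<bullet> (x - v)) \<le> g x \<bullet> (x - y)" by linarith
  then show ?thesis using r by (simp add: t_def field_simps)
qed

lemma gradient_component_eq_linear_coeff:
  fixes f :: "real^'n::finite \<Rightarrow> real" and g :: "real^'n \<Rightarrow> real^'n"
  assumes d: "(f has_derivative (\<lambda>v. g x \<bullet> v)) (at x)"
    and h: "\<And>v w. (\<forall>i\<in>UNIV - I. v $ i = w $ i) \<Longrightarrow> h v = h w"
    and c: "\<And>v. f v = h v + (\<Sum>i\<in>I. c $ i * v $ i)"
    and i: "i \<in> I"
  shows "g x $ i = c $ i"
proof -
  define e :: "real^'n" where "e = axis i 1"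
  have "((f \<circ> (\<lambda>t. x + t *\<^sub>R e)) has_derivative ((\<lambda>v. g x \<bullet> v) \<circ> (\<lambda>s. s *\<^sub>R e))) (at 0)"
    by (rule diff_chain_at) (use d in \<open>auto intro!: derivative_eq_intros\<close>)
  moreover have "f \<circ> (\<lambda>t. x + t *\<^sub>R e) = (\<lambda>t. f x + t * c $ i)"
  proof
    fix t
    have "h (x + t *\<^sub>R e) = h x" using i by (intro h) (auto simp: e_def axis_def)
    moreover have "(\<Sum>l\<in>I. c $ l * (x + t *\<^sub>R e) $ l) =
        (\<Sum>l\<in>I. c $ l * x $ l + (if l = i then t * c $ i else 0))"
      by (intro sum.cong) (auto simp: e_def axis_def algebra_simps)
    ultimately show "(f \<circ> (\<lambda>t. x + t *\<^sub>R e)) t = f x + t * c $ i"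
      using i by (simp add: c sum.distrib)
  qed
  moreover have "((\<lambda>t. f x + t * c $ i) has_derivative (\<lambda>s. s * c $ i)) (at 0)"
    by (auto intro!: derivative_eq_intros)
  ultimately have "(\<lambda>v. g x \<bullet> v) \<circ> (\<lambda>s. s *\<^sub>R e) = (\<lambda>s. s * c $ i)"
    using has_derivative_unique by metis
  then have "g x \<bullet> e = c $ i" by (metis comp_apply scale_one mult_1)
  then show ?thesis by (simp add: e_def inner_axis)
qed

text \<open>Since \<open>f\<close> is linear in the integer part and the gradient reproduces that linear part,
  the Taylor remainder only sees the continuous components.\<close>

lemma taylor_remainder_le_pl_norm:
  fixes f :: "real^'n::finite \<Rightarrow> real" and g :: "real^'n \<Rightarrow> real^'n"
  assumes d: "(f has_derivative (\<lambda>v. g x \<bullet> v)) (at x)"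
    and h: "\<And>v w. (\<forall>i\<in>UNIV - I. v $ i = w $ i) \<Longrightarrow> h v = h w"
    and c: "\<And>v. f v = h v + (\<Sum>i\<in>I. c $ i * v $ i)"
    and "e > 0"
  obtains \<delta> where "\<delta> > 0"
    and "\<And>v. pl_norm b I (v - x) < \<delta> \<Longrightarrow>
           \<bar>f v - f x - g x \<bullet> (v - x)\<bar> \<le> e * pl_norm b I (v - x)"
proof -
  define C where "C = real CARD('n)"
  have C: "C > 0" by (simp add: C_def)
  define pr where "pr v = join_parts I x v" for v
  have rem_pr: "f v - f x - g x \<bullet> (v - x) = f (pr v) - f x - g x \<bullet> (pr v - x)" for v
  proof -
    have "f v - f (pr v) = (\<Sum>i\<in>I. c $ i * (v $ i - x $ i))"
      using h[of v "pr v"]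
      by (simp add: c pr_def join_parts_def sum_subtractf[symmetric] algebra_simps)
    also have "\<dots> = (\<Sum>i\<in>UNIV. if i \<in> I then g x $ i * (v $ i - x $ i) else 0)"
      using gradient_component_eq_linear_coeff[where g=g and x=x, OF d h c] by (simp add: sum.If_cases)
    also have "\<dots> = g x \<bullet> (v - pr v)"
      unfolding inner_vec_def by (intro sum.cong) (auto simp: pr_def join_parts_def)
    finally show ?thesis by (simp add: inner_diff_right)
  qed
  have "e / C > 0" using \<open>e > 0\<close> C by simp
  then obtain \<delta>' where "\<delta>' > 0" and rem: "\<And>v. norm (v - x) < \<delta>' \<Longrightarrow>
      norm (f v - f x - g x \<bullet> (v - x)) \<le> e / C * norm (v - x)"
    using d[unfolded has_derivative_within_alt] by blast
  have "\<bar>f v - f x - g x \<bullet> (v - x)\<bar> \<le> e * pl_norm b I (v - x)"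
    if v: "pl_norm b I (v - x) < \<delta>' / C" for v
  proof -
    have "norm (pr v - x) \<le> C * pl_norm b I (pr v - x)"
      unfolding C_def by (rule norm_le_card_mult_pl_norm) (simp add: pr_def join_parts_def)
    also have "pl_norm b I (pr v - x) = pl_norm b I (v - x)"
      by (simp add: pr_def pl_norm_join_parts_diff)
    finally have npr: "norm (pr v - x) \<le> C * pl_norm b I (v - x)" .
    also have "\<dots> < \<delta>'" using v C by (simp add: field_simps)
    finally have "\<bar>f v - f x - g x \<bullet> (v - x)\<bar> \<le> e / C * norm (pr v - x)"
      using rem[of "pr v"] unfolding rem_pr[of v] by simp
    also have "\<dots> \<le> e / C * (C * pl_norm b I (v - x))"
      using npr \<open>e > 0\<close> C by (intro mult_left_mono) auto
    finally show ?thesis using C by simp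
  qed
  then show thesis using that[of "\<delta>' / C"] \<open>\<delta>' > 0\<close> C by simp
qed

lemma smil_argmin_eventually_sufficient_decrease:
  fixes f :: "real^'n::finite \<Rightarrow> real" and g :: "real^'n \<Rightarrow> real^'n"
  assumes "closed Xbar" "convex Xbar" "bounded (int_part I ` feasible_set Xbar I)"
    and d: "(f has_derivative (\<lambda>v. g x \<bullet> v)) (at x)"
    and h: "\<And>v w. (\<forall>i\<in>UNIV - I. v $ i = w $ i) \<Longrightarrow> h v = h w"
    and c: "\<And>v. f v = h v + (\<Sum>i\<in>I. c $ i * v $ i)"
    and "x \<in> feasible_set Xbar I" "0 < \<Delta>" "0 < \<kappa>" "\<kappa> < 1" "\<rho> < 1"
    and y: "\<And>j. y j \<in> smil_argmin g (feasible_set Xbar I) b I x (\<Delta> * \<kappa> ^ j)"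
    and \<Psi>_pos: "\<And>j. g x \<bullet> (x - y j) > 0"
  shows "\<exists>j. f x - f (y j) \<ge> \<rho> * (g x \<bullet> (x - y j))"
proof -
  define r where "r j = \<Delta> * \<kappa> ^ j" for j
  define \<Psi> where "\<Psi> j = g x \<bullet> (x - y j)" for j
  have r_pos: "r j > 0" for j using assms by (simp add: r_def)
  have "r \<longlonglongrightarrow> 0"
    unfolding r_def using assms by (auto intro!: tendsto_mult_right_zero LIMSEQ_power_zero)
  obtain s where p: "join_parts I (y s) x \<in> feasible_set Xbar I"
    "g x \<bullet> join_parts I (y s) x \<le> g x \<bullet> x"
    using smil_argmin_limit_point[OF assms(1,7,3) \<open>r \<longlonglongrightarrow> 0\<close>] y unfolding r_def by blast
  define \<sigma> where "\<sigma> = \<Psi> s / r s"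
  have linear: "\<sigma> * r j \<le> \<Psi> j" if "j \<ge> s" for j
  proof -
    have "r j \<le> r s" using that assms by (simp add: r_def mult_left_mono power_decreasing)
    then have "r j * \<Psi> s \<le> r s * \<Psi> j"
      using smil_argmin_decrease_lower_bound[where g=g and x=x and b=b and R="r s" and y="y j"
          and r="r j", OF assms(2) p] y r_pos
      unfolding \<Psi>_def r_def smil_argmin_def pl_ball_def by (auto simp: less_imp_le)
    then show ?thesis using r_pos[of s] by (simp add: \<sigma>_def field_simps)
  qed
  have "\<sigma> > 0" using \<Psi>_pos r_pos by (simp add: \<sigma>_def \<Psi>_def)
  then have "(1 - \<rho>) * \<sigma> > 0" using \<open>\<rho> < 1\<close> by simp
  then obtain \<delta> where "\<delta> > 0" and rem: "\<And>v. pl_norm b I (v - x) < \<delta> \<Longrightarrow>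
      \<bar>f v - f x - g x \<bullet> (v - x)\<bar> \<le> (1 - \<rho>) * \<sigma> * pl_norm b I (v - x)"
    using taylor_remainder_le_pl_norm[where g=g and x=x, OF d h c] by metis
  have "\<forall>\<^sub>F j in sequentially. s \<le> j \<and> r j < \<delta>"
    using eventually_ge_at_top order_tendstoD(2)[OF \<open>r \<longlonglongrightarrow> 0\<close> \<open>\<delta> > 0\<close>]
    by (rule eventually_conj)
  then obtain j where j: "j \<ge> s" "r j < \<delta>"
    unfolding eventually_sequentially by blast
  have yball: "pl_norm b I (y j - x) \<le> r j"
    using y[of j] unfolding smil_argmin_def pl_ball_def r_def by auto
  have "\<bar>f (y j) - f x + \<Psi> j\<bar> \<le> (1 - \<rho>) * \<sigma> * pl_norm b I (y j - x)"
    using rem[of "y j"] yball j(2) by (simp add: \<Psi>_def inner_diff_right)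
  also have "\<dots> \<le> (1 - \<rho>) * (\<sigma> * r j)"
    using yball \<open>\<sigma> > 0\<close> \<open>\<rho> < 1\<close> by (simp add: mult_left_mono)
  also have "\<dots> \<le> (1 - \<rho>) * \<Psi> j" using linear[OF j(1)] \<open>\<rho> < 1\<close> by (simp add: mult_left_mono)
  finally have "f x - f (y j) \<ge> \<rho> * \<Psi> j" by (auto simp: abs_le_iff algebra_simps)
  then show ?thesis unfolding \<Psi>_def by blast
qed

lemma smil_run_invariant:
  assumes P: "smil_params \<epsilon> \<Delta>0 \<rho> \<kappa> \<kappa>m \<rho>1 \<rho>2 \<Delta>min \<Delta>max"
    and R: "smil_run f g Xbar I use_l1 \<epsilon> \<Delta>0 \<rho> \<kappa> \<kappa>m \<rho>1 \<rho>2 \<Delta>min \<Delta>max x0 x m D J k"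
    and "i \<le> k"
  shows "x i \<in> feasible_set Xbar I \<and> f (x i) \<le> m i \<and> D i > 0"
  using \<open>i \<le> k\<close>
proof (induction i)
  case 0
  then show ?case using R P unfolding smil_run_def smil_params_def Let_def by auto
next
  case (Suc i)
  then have IH: "D i > 0" and "i < k" by auto
  let ?\<Psi> = "g (x i) \<bullet> (x i - x (Suc i))" and ?\<Delta> = "D i * \<kappa> ^ J i"
  from R \<open>i < k\<close> have step:
    "x (Suc i) \<in> smil_argmin g (feasible_set Xbar I) use_l1 I (x i) ?\<Delta>"
    "?\<Psi> > \<epsilon>" "m i - f (x (Suc i)) \<ge> \<rho> * ?\<Psi>"
    "m (Suc i) = (1 - \<kappa>m) * m i + \<kappa>m * f (x (Suc i))"
    "D (Suc i) = \<kappa> * ?\<Delta> \<or> D (Suc i) = ?\<Delta> \<or> D (Suc i) = ?\<Delta> / \<kappa> \<or> \<Delta>min \<le> D (Suc i)"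
    unfolding smil_run_def Let_def by auto
  have pp: "\<epsilon> \<ge> 0" "0 < \<rho>" "0 < \<kappa>" "\<kappa>m \<le> 1" "0 < \<Delta>min"
    using P unfolding smil_params_def by auto
  have "0 \<le> \<rho> * ?\<Psi>" using step(2) pp by simp
  then have "0 \<le> m i - f (x (Suc i))" using step(3) by linarith
  then have "f (x (Suc i)) \<le> m (Suc i)"
    using step(4) pp mult_nonneg_nonneg[of "1 - \<kappa>m" "m i - f (x (Suc i))"]
    by (simp add: algebra_simps)
  moreover have "D (Suc i) > 0" using step(5) IH pp by auto
  moreover have "x (Suc i) \<in> feasible_set Xbar I" using step(1) by (simp add: smil_argmin_def)
  ultimately show ?case by blast
qed

theorem mainTheorem4:
  fixes f :: "real^'n::finite \<Rightarrow> real" and g :: "real^'n \<Rightarrow> real^'n"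
    and Xbar :: "(real^'n) set" and I :: "'n set" and use_l1 :: bool
    and \<epsilon> \<Delta>0 \<rho> \<kappa> \<kappa>m \<rho>1 \<rho>2 \<Delta>min \<Delta>max :: real and x0 :: "real^'n"
    and x :: "nat \<Rightarrow> real^'n" and m D :: "nat \<Rightarrow> real" and J :: "nat \<Rightarrow> nat" and k :: nat
    and y :: "nat \<Rightarrow> real^'n"
  assumes "smil_assumptions f g Xbar I"
    and "smil_params \<epsilon> \<Delta>0 \<rho> \<kappa> \<kappa>m \<rho>1 \<rho>2 \<Delta>min \<Delta>max"
    and "smil_run f g Xbar I use_l1 \<epsilon> \<Delta>0 \<rho> \<kappa> \<kappa>m \<rho>1 \<rho>2 \<Delta>min \<Delta>max x0 x m D J k"
    and "\<And>j. y j \<in> smil_argmin g (feasible_set Xbar I) use_l1 I (x k) (D k * \<kappa> ^ j)"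
  shows "\<exists>j. g (x k) \<bullet> (x k - y j) \<le> \<epsilon> \<or> m k - f (y j) \<ge> \<rho> * (g (x k) \<bullet> (x k - y j))"
proof (cases "\<exists>j. g (x k) \<bullet> (x k - y j) \<le> \<epsilon>")
  case False
  have params: "\<epsilon> \<ge> 0" "0 < \<kappa>" "\<kappa> < 1" "\<rho> < 1"
    using assms(2) unfolding smil_params_def by auto
  have run: "x k \<in> feasible_set Xbar I" "f (x k) \<le> m k" "D k > 0"
    using smil_run_invariant[OF assms(2,3) order_refl] by auto
  obtain h c where h: "\<And>v w. (\<forall>i\<in>UNIV - I. v $ i = w $ i) \<Longrightarrow> h v = h w"
    and c: "\<And>v. f v = h v + (\<Sum>i\<in>I. c $ i * v $ i)"
    using assms(1) unfolding smil_assumptions_def by blast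
  have "polyhedron Xbar" "(f has_derivative (\<lambda>v. g (x k) \<bullet> v)) (at (x k))"
    and "bounded (int_part I ` feasible_set Xbar I)"
    using assms(1) unfolding smil_assumptions_def int_part_def by auto
  moreover have "g (x k) \<bullet> (x k - y j) > 0" for j
    using False params(1) by (meson le_less_trans not_le)
  ultimately obtain j where "f (x k) - f (y j) \<ge> \<rho> * (g (x k) \<bullet> (x k - y j))"
    using smil_argmin_eventually_sufficient_decrease[OF _ _ _ _ h c run(1,3) params(2-4) assms(4)]
      polyhedron_imp_closed polyhedron_imp_convex
    by blast
  then have "m k - f (y j) \<ge> \<rho> * (g (x k) \<bullet> (x k - y j))" using run(2) by linarith
  then show ?thesis by blast
qed auto

end
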